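(* Let $P>0$, $v\ge2$, $\omega\in(0,1)$, and let $\Gamma'_{T_1},\Gamma'_{T_2},\Gamma'_R,\Gamma''_{T_1},\Gamma''_{T_2}\ge0$. Set $B_i=\Gamma''_{T_i}+2\Gamma'_{T_i}+1$ and $C_i=(\Gamma'_R+1)(\Gamma'_{T_i}+1)$ for $i=1,2$. For $D\in(0,1)$ let $\bar\gamma_1=P(1-D)^{-v}$, $\bar\gamma_2=PD^{-v}$ and $$\mathcal L(\omega,D)=\frac{B_2-B_1}{\bar\gamma_2}+\frac{B_1+C_1}{\omega\bar\gamma_2}+\frac{B_1-B_2}{\bar\gamma_1}+\frac{B_2+C_2}{(1-\omega)\bar\gamma_1}.$$ Then $D\mapsto\mathcal L(\omega,D)$ is strictly convex on $(0,1)$ and its unique minimizer on $(0,1)$ is $$D^{\rm opt}=\frac{1}{\left(\dfrac{\omega(1-\omega)(B_2-B_1)+(1-\omega)(B_1+C_1)}{\omega(1-\omega)(B_1-B_2)+\omega(B_2+C_2)}\right)^{\frac{1}{v-1}}+1}.$$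
   Context: Terminals $T_1,T_2$ at normalized distance $1$ with the relay on the segment between them at distance $1-D$ from $T_1$ and $D$ from $T_2$; $v$ is the path-loss exponent, so the terminal–relay average SNRs are $\bar\gamma_1=P(1-D)^{-v}$, $\bar\gamma_2=PD^{-v}$. $\mathcal L$ is (up to a positive factor) the high-SNR asymptotic protocol outage probability, $\omega$ the relay power-allocation coefficient, and $\Gamma'_N,\Gamma''_N$ the first and second moments of the interference power at node $N$. *)

theory Defs
  imports "HOL-Analysis.Analysis"
begin

definition strictly_convex_on :: "real set \<Rightarrow> (real \<Rightarrow> real) \<Rightarrow> bool" where
  "strictly_convex_on S f \<longleftrightarrow> convex S \<and>
     (\<forall>x\<in>S. \<forall>y\<in>S. x \<noteq> y \<longrightarrow> (\<forall>u. 0 < u \<and> u < 1 \<longrightarrow>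
        f (u * x + (1 - u) * y) < u * f x + (1 - u) * f y))"

definition gbar1 :: "real \<Rightarrow> real \<Rightarrow> real \<Rightarrow> real" where
  "gbar1 P v D = P * (1 - D) powr (- v)"

definition gbar2 :: "real \<Rightarrow> real \<Rightarrow> real \<Rightarrow> real" where
  "gbar2 P v D = P * D powr (- v)"

definition Lobj :: "real \<Rightarrow> real \<Rightarrow> real \<Rightarrow> real \<Rightarrow> real \<Rightarrow> real \<Rightarrow> real \<Rightarrow> real \<Rightarrow> real" where
  "Lobj P v B1 B2 C1 C2 \<omega> D =
     (B2 - B1) / gbar2 P v D + (B1 + C1) / (\<omega> * gbar2 P v D)
   + (B1 - B2) / gbar1 P v D + (B2 + C2) / ((1 - \<omega>) * gbar1 P v D)"

end

theory Submission
  imports Defs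
begin

text \<open>Writing \<open>a = (B2 - B1) + (B1 + C1)/\<omega>\<close> and \<open>b = (B1 - B2) + (B2 + C2)/(1 - \<omega>)\<close>, both
  positive, the objective is \<open>(a D^v + b (1 - D)^v) / P\<close>. Its derivative
  \<open>v (a D^(v-1) - b (1 - D)^(v-1)) / P\<close> is strictly increasing on \<open>(0,1)\<close>, so by the mean
  value theorem the objective is strictly convex and strictly minimised where the derivative
  vanishes, i.e. where \<open>(1 - D)/D = (a/b)^(1/(v-1))\<close>; this is \<open>D\<^sup>o\<^sup>p\<^sup>t\<close>.\<close>

lemma real_convex_MVT:
  fixes f f' :: "real \<Rightarrow> real"
  assumes "convex S" and der: "\<And>x. x \<in> S \<Longrightarrow> (f has_real_derivative f' x) (at x)"
    and "x \<in> S" "y \<in> S" "x < y"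
  obtains p where "x < p" "p < y" "p \<in> S" "f y - f x = (y - x) * f' p"
proof -
  have between: "p \<in> S" if "x \<le> p" "p \<le> y" for p
    using assms(1,3,4) that is_interval_convex_1 is_interval_1 by meson
  then obtain p where "x < p" "p < y" "f y - f x = (y - x) * f' p"
    using MVT2[OF \<open>x < y\<close>, of f f'] der by blast
  then show ?thesis
    using that between by simp
qed

lemma strictly_convex_on_if_deriv_strict_mono:
  fixes f f' :: "real \<Rightarrow> real"
  assumes "convex S" and der: "\<And>x. x \<in> S \<Longrightarrow> (f has_real_derivative f' x) (at x)"
    and mono: "strict_mono_on S f'"
  shows "strictly_convex_on S f"
proof -
  have less: "f (u * x + (1 - u) * y) < u * f x + (1 - u) * f y"
    if xy: "x \<in> S" "y \<in> S" "x < y" and u: "0 < u" "u < 1" for x y u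
  proof -
    define z where "z = u * x + (1 - u) * y"
    have z_x: "z - x = (1 - u) * (y - x)" and y_z: "y - z = u * (y - x)"
      unfolding z_def by algebra+
    have "x < z" "z < y" using z_x y_z xy u by (smt (verit) mult_pos_pos)+
    moreover have "z \<in> S"
      unfolding z_def using convexD[OF \<open>convex S\<close> xy(1,2), of u "1 - u"] u by simp
    ultimately obtain p q where p: "x < p" "p < z" "p \<in> S" "f z - f x = (z - x) * f' p"
      and q: "z < q" "q < y" "q \<in> S" "f y - f z = (y - z) * f' q"
      using real_convex_MVT[OF \<open>convex S\<close> der] xy by metis
    have "f' p < f' q" using mono p q by (simp add: strict_mono_on_def)
    have "u * f x + (1 - u) * f y - f z = - u * (f z - f x) + (1 - u) * (f y - f z)"
      by (simp add: algebra_simps)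
    also have "\<dots> = u * (1 - u) * (y - x) * (f' q - f' p)"
      unfolding p(4) q(4) z_x y_z by (simp add: algebra_simps)
    also have "\<dots> > 0" using u xy \<open>f' p < f' q\<close> by simp
    finally show ?thesis unfolding z_def by simp
  qed
  show ?thesis
    unfolding strictly_convex_on_def
  proof (intro conjI ballI impI allI \<open>convex S\<close>)
    fix x y u :: real assume "x \<in> S" "y \<in> S" "x \<noteq> y" "0 < u \<and> u < 1"
    then consider "x < y" | "y < x" by linarith
    then show "f (u * x + (1 - u) * y) < u * f x + (1 - u) * f y"
    proof cases
      case 2
      then have "f ((1 - u) * y + (1 - (1 - u)) * x) < (1 - u) * f y + (1 - (1 - u)) * f x"
        using less[of y x "1 - u"] \<open>x \<in> S\<close> \<open>y \<in> S\<close> \<open>0 < u \<and> u < 1\<close> by simp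
      then show ?thesis by (simp add: algebra_simps)
    qed (use less \<open>x \<in> S\<close> \<open>y \<in> S\<close> \<open>0 < u \<and> u < 1\<close> in auto)
  qed
qed

lemma strict_min_if_deriv_strict_mono_zero:
  fixes f f' :: "real \<Rightarrow> real"
  assumes "convex S" and der: "\<And>x. x \<in> S \<Longrightarrow> (f has_real_derivative f' x) (at x)"
    and mono: "strict_mono_on S f'"
    and "d \<in> S" "f' d = 0" "x \<in> S" "x \<noteq> d"
  shows "f d < f x"
proof -
  consider "x < d" | "d < x" using \<open>x \<noteq> d\<close> by linarith
  then show ?thesis
  proof cases
    case 1
    then obtain p where "x < p" "p < d" "p \<in> S" "f d - f x = (d - x) * f' p"
      using real_convex_MVT[OF \<open>convex S\<close> der] assms(4,6) by metis
    moreover have "f' p < 0" using mono \<open>p < d\<close> \<open>p \<in> S\<close> assms(4,5) by (metis strict_mono_onD)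
    ultimately show ?thesis using 1 by (smt (verit) mult_pos_neg)
  next
    case 2
    then obtain p where "d < p" "p < x" "p \<in> S" "f x - f d = (x - d) * f' p"
      using real_convex_MVT[OF \<open>convex S\<close> der] assms(4,6) by metis
    moreover have "f' p > 0" using mono \<open>d < p\<close> \<open>p \<in> S\<close> assms(4,5) by (metis strict_mono_onD)
    ultimately show ?thesis using 2 by (smt (verit) mult_pos_pos)
  qed
qed

lemma strictly_convex_on_divide_const:
  assumes "strictly_convex_on S f" "c > 0"
  shows "strictly_convex_on S (\<lambda>x. f x / c)"
  using assms unfolding strictly_convex_on_def
  by (auto simp: add_divide_distrib[symmetric] divide_strict_right_mono)

lemma strictly_convex_on_cong:
  assumes "strictly_convex_on S f" and eq: "\<And>x. x \<in> S \<Longrightarrow> f x = g x"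
  shows "strictly_convex_on S g"
  unfolding strictly_convex_on_def
proof (intro conjI ballI impI allI)
  show "convex S" using assms(1) by (simp add: strictly_convex_on_def)
  fix x y u :: real assume "x \<in> S" "y \<in> S" "x \<noteq> y" "0 < u \<and> u < 1"
  moreover from this have "u * x + (1 - u) * y \<in> S"
    using convexD[OF \<open>convex S\<close>, of x y u "1 - u"] by simp
  ultimately show "g (u * x + (1 - u) * y) < u * g x + (1 - u) * g y"
    using assms(1) eq unfolding strictly_convex_on_def by metis
qed

definition power_blend :: "real \<Rightarrow> real \<Rightarrow> real \<Rightarrow> real \<Rightarrow> real" where
  "power_blend a b v D = a * D powr v + b * (1 - D) powr v"

definition power_blend_deriv :: "real \<Rightarrow> real \<Rightarrow> real \<Rightarrow> real \<Rightarrow> real" where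
  "power_blend_deriv a b v D = v * (a * D powr (v - 1) - b * (1 - D) powr (v - 1))"

lemma has_real_derivative_power_blend:
  assumes "0 < D" "D < 1"
  shows "(power_blend a b v has_real_derivative power_blend_deriv a b v D) (at D)"
proof -
  have "((\<lambda>D. a * D powr v + b * (1 - D) powr v) has_real_derivative
      a * (v * D powr (v - 1)) + b * (v * (1 - D) powr (v - 1) * -1)) (at D)"
    using assms by (auto intro!: derivative_eq_intros)
  then show ?thesis
    unfolding power_blend_def[abs_def] power_blend_deriv_def by (simp add: algebra_simps)
qed

lemma strict_mono_on_power_blend_deriv:
  assumes "a > 0" "b > 0" "v > 1"
  shows "strict_mono_on {0<..<1} (power_blend_deriv a b v)"
proof (rule strict_mono_onI)
  fix x y :: real assume "x \<in> {0<..<1}" "y \<in> {0<..<1}" "x < y"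
  then have "x powr (v - 1) < y powr (v - 1)" "(1 - y) powr (v - 1) < (1 - x) powr (v - 1)"
    using assms(3) by (auto intro: powr_less_mono2)
  then have "a * x powr (v - 1) - b * (1 - x) powr (v - 1) < a * y powr (v - 1) - b * (1 - y) powr (v - 1)"
    using assms(1,2) by (smt (verit) mult_strict_left_mono)
  then show "power_blend_deriv a b v x < power_blend_deriv a b v y"
    unfolding power_blend_deriv_def using assms(3) by simp
qed

lemma strictly_convex_on_power_blend:
  assumes "a > 0" "b > 0" "v > 1"
  shows "strictly_convex_on {0<..<1} (power_blend a b v)"
  using has_real_derivative_power_blend strict_mono_on_power_blend_deriv[OF assms]
  by (intro strictly_convex_on_if_deriv_strict_mono) auto

text \<open>At \<open>D = 1/(r + 1)\<close> with \<open>r^(v-1) = a/b\<close> we have \<open>1 - D = r D\<close>, which balances the two terms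
  of the derivative.\<close>

lemma power_blend_deriv_zero:
  assumes "a > 0" "b > 0" "v > 1"
  defines "D \<equiv> 1 / ((a / b) powr (1 / (v - 1)) + 1)"
  shows "D \<in> {0<..<1}" and "power_blend_deriv a b v D = 0"
proof -
  define r where "r = (a / b) powr (1 / (v - 1))"
  have "r > 0" unfolding r_def using assms by simp
  then show D01: "D \<in> {0<..<1}" unfolding D_def r_def[symmetric] by simp
  have one_minus_D: "1 - D = r * D"
    unfolding D_def r_def[symmetric] using \<open>r > 0\<close> by (simp add: field_simps)
  have "r powr (v - 1) = a / b" unfolding r_def using assms by (simp add: powr_powr)
  then have "b * (1 - D) powr (v - 1) = a * D powr (v - 1)"
    unfolding one_minus_D using \<open>r > 0\<close> D01 \<open>b > 0\<close> by (simp add: powr_mult)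
  then show "power_blend_deriv a b v D = 0" unfolding power_blend_deriv_def by simp
qed

lemma power_blend_strict_min:
  assumes "a > 0" "b > 0" "v > 1" "D \<in> {0<..<1}"
    and "D \<noteq> 1 / ((a / b) powr (1 / (v - 1)) + 1)"
  shows "power_blend a b v (1 / ((a / b) powr (1 / (v - 1)) + 1)) < power_blend a b v D"
  using has_real_derivative_power_blend strict_mono_on_power_blend_deriv[OF assms(1-3)]
    power_blend_deriv_zero[OF assms(1-3)] assms(4,5)
  by (intro strict_min_if_deriv_strict_mono_zero[of "{0<..<1}" "power_blend a b v"
      "power_blend_deriv a b v"]) auto

lemma Lobj_eq_power_blend:
  assumes "P > 0" "0 < \<omega>" "\<omega> < 1" "0 < D" "D < 1"
  shows "Lobj P v B1 B2 C1 C2 \<omega> D =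
    power_blend ((B2 - B1) + (B1 + C1) / \<omega>) ((B1 - B2) + (B2 + C2) / (1 - \<omega>)) v D / P"
proof -
  have "1 / (D powr - v) = D powr v" "1 / ((1 - D) powr - v) = (1 - D) powr v"
    using assms by (simp_all add: powr_minus divide_inverse)
  moreover have "Lobj P v B1 B2 C1 C2 \<omega> D =
      ((B2 - B1) + (B1 + C1) / \<omega>) * (1 / (D powr - v)) / P
    + ((B1 - B2) + (B2 + C2) / (1 - \<omega>)) * (1 / ((1 - D) powr - v)) / P"
    unfolding Lobj_def gbar1_def gbar2_def using assms by (simp add: field_simps)
  ultimately show ?thesis
    unfolding power_blend_def by (simp add: add_divide_distrib)
qed

theorem mainTheorem5:
  fixes P v \<omega> G1' G2' GR' G1'' G2'' :: real
  assumes "P > 0" and "v \<ge> 2" and "0 < \<omega>" and "\<omega> < 1"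
    and "G1' \<ge> 0" and "G2' \<ge> 0" and "GR' \<ge> 0" and "G1'' \<ge> 0" and "G2'' \<ge> 0"
  defines "B1 \<equiv> G1'' + 2 * G1' + 1"
    and "B2 \<equiv> G2'' + 2 * G2' + 1"
    and "C1 \<equiv> (GR' + 1) * (G1' + 1)"
    and "C2 \<equiv> (GR' + 1) * (G2' + 1)"
  defines "Dopt \<equiv> 1 / ((((\<omega> * (1 - \<omega>) * (B2 - B1) + (1 - \<omega>) * (B1 + C1))
                         / (\<omega> * (1 - \<omega>) * (B1 - B2) + \<omega> * (B2 + C2))) powr (1 / (v - 1))) + 1)"
  shows "strictly_convex_on {0<..<1} (\<lambda>D. Lobj P v B1 B2 C1 C2 \<omega> D)
       \<and> Dopt \<in> {0<..<1}
       \<and> (\<forall>D\<in>{0<..<1}. D \<noteq> Dopt \<longrightarrow> Lobj P v B1 B2 C1 C2 \<omega> Dopt < Lobj P v B1 B2 C1 C2 \<omega> D)"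
proof -
  define a where "a = (B2 - B1) + (B1 + C1) / \<omega>"
  define b where "b = (B1 - B2) + (B2 + C2) / (1 - \<omega>)"
  have "B1 \<ge> 0" "B2 \<ge> 0" "C1 > 0" "C2 > 0"
    using assms(5-9) unfolding B1_def B2_def C1_def C2_def by simp_all
  then have "\<omega> * B2 + (1 - \<omega>) * B1 + C1 > 0" "(1 - \<omega>) * B1 + \<omega> * B2 + C2 > 0"
    using assms(3,4) by (smt (verit) mult_nonneg_nonneg)+
  moreover have "a = (\<omega> * B2 + (1 - \<omega>) * B1 + C1) / \<omega>"
    "b = ((1 - \<omega>) * B1 + \<omega> * B2 + C2) / (1 - \<omega>)"
    unfolding a_def b_def using assms(3,4) by (simp_all add: field_simps)
  ultimately have "a > 0" "b > 0" using assms(3,4) by simp_all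
  have "v > 1" using assms(2) by simp
  have Dopt_eq: "Dopt = 1 / ((a / b) powr (1 / (v - 1)) + 1)"
    unfolding Dopt_def a_def b_def using assms(3,4) by (simp add: field_simps)
  have L_eq: "Lobj P v B1 B2 C1 C2 \<omega> D = power_blend a b v D / P" if "D \<in> {0<..<1}" for D
    unfolding a_def b_def using Lobj_eq_power_blend assms(1,3,4) that by simp
  have "strictly_convex_on {0<..<1} (\<lambda>D. Lobj P v B1 B2 C1 C2 \<omega> D)"
    using strictly_convex_on_power_blend[OF \<open>a > 0\<close> \<open>b > 0\<close> \<open>v > 1\<close>] \<open>P > 0\<close> L_eq
    by (metis strictly_convex_on_divide_const strictly_convex_on_cong)
  moreover have "Dopt \<in> {0<..<1}"
    unfolding Dopt_eq by (rule power_blend_deriv_zero(1)[OF \<open>a > 0\<close> \<open>b > 0\<close> \<open>v > 1\<close>])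
  moreover have "Lobj P v B1 B2 C1 C2 \<omega> Dopt < Lobj P v B1 B2 C1 C2 \<omega> D"
    if "D \<in> {0<..<1}" "D \<noteq> Dopt" for D
    using power_blend_strict_min[OF \<open>a > 0\<close> \<open>b > 0\<close> \<open>v > 1\<close> that(1)] that \<open>P > 0\<close>
      \<open>Dopt \<in> {0<..<1}\<close> L_eq
    unfolding Dopt_eq by (simp add: divide_strict_right_mono)
  ultimately show ?thesis by blast
qed

end
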